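(* Let $m,n\in\mathbb{N}$. For $1\le\ell\le m$ let $0<q_{\ell}<1$, $\alpha_{\ell}\ge0$, $r_{\ell},s_{\ell}\in\mathbb{N}_{0}$, and $a_{1,\ell},\dots,a_{r_{\ell},\ell},b_{1,\ell},\dots,b_{s_{\ell},\ell}\in\mathbb{C}$ with \[ \frac{(a_{1,\ell},\dots,a_{r_{\ell},\ell};q_{\ell})_{N}}{(b_{1,\ell},\dots,b_{s_{\ell},\ell};q_{\ell})_{N}}\ge0\quad\text{for all }N\in\mathbb{N}_{0}. \] Let $z_{j,\ell}\in\mathbb{C}$ for $1\le j\le n$, where if $\alpha_{\ell}>0$ the $z_{j,\ell}$ are arbitrary, and if $\alpha_{\ell}=0$ the $z_{j,\ell}$ ($1\le j\le n$) lie in an open disk $\{|z|<R_\ell\}$, $R_\ell<1$, chosen so that the series defining ${}_{r_\ell}A^{(0)}_{s_\ell}$ converges at $w$ whenever $|w|<R_\ell^2$. Then the $n\times n$ matrix \[ \left(\prod_{\ell=1}^{m}{}_{r_{\ell}}A_{s_{\ell}}^{(\alpha_{\ell})}\left(a_{1,\ell},\dots,a_{r_{\ell},\ell};\,b_{1,\ell},\dots,b_{s_{\ell},\ell};\,q_{\ell};\,z_{j,\ell}\overline{z_{k,\ell}}\right)\right)_{j,k=1}^{n} \] is positive semidefinite.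
   Context: For $0<q<1$: $(z;q)_\infty=\prod_{k\ge0}(1-zq^k)$, $(z;q)_N=(z;q)_\infty/(zq^N;q)_\infty$, and $(z_1,\dots,z_r;q)_N=\prod_{i}(z_i;q)_N$. For $\alpha\ge0$, \[ {}_{r}A_{s}^{(\alpha)}(a_{1},\dots,a_{r};\,b_{1},\dots,b_{s};\,q;\,z)=\sum_{N=0}^{\infty}\frac{(a_{1},\dots,a_{r};q)_{N}}{(b_{1},\dots,b_{s};q)_{N}}q^{\alpha N^{2}}z^{N}. \] A complex matrix $A=(a_{j,k})$ is positive semidefinite if $\sum_{j,k}a_{j,k}w_j\overline{w_k}\ge0$ for all complex $w_j$. *)

theory Defs
  imports "HOL-Analysis.Analysis" "HOL-Library.Complex_Order"
begin

definition qpoch :: "complex \<Rightarrow> real \<Rightarrow> nat \<Rightarrow> complex" where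
  "qpoch z q N = (\<Prod>k<N. 1 - z * complex_of_real (q ^ k))"

definition qpoch_multi :: "complex list \<Rightarrow> real \<Rightarrow> nat \<Rightarrow> complex" where
  "qpoch_multi zs q N = (\<Prod>z\<leftarrow>zs. qpoch z q N)"

definition rAs_coeff :: "complex list \<Rightarrow> complex list \<Rightarrow> real \<Rightarrow> nat \<Rightarrow> complex" where
  "rAs_coeff as bs q N = qpoch_multi as q N / qpoch_multi bs q N"

definition rAs_term :: "real \<Rightarrow> complex list \<Rightarrow> complex list \<Rightarrow> real \<Rightarrow> complex \<Rightarrow> nat \<Rightarrow> complex" where
  "rAs_term \<alpha> as bs q z N = rAs_coeff as bs q N * complex_of_real (q powr (\<alpha> * real N ^ 2)) * z ^ N"

definition rAs :: "real \<Rightarrow> complex list \<Rightarrow> complex list \<Rightarrow> real \<Rightarrow> complex \<Rightarrow> complex" where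
  "rAs \<alpha> as bs q z = (\<Sum>N. rAs_term \<alpha> as bs q z N)"

definition psd_matrix :: "nat \<Rightarrow> (nat \<Rightarrow> nat \<Rightarrow> complex) \<Rightarrow> bool" where
  "psd_matrix n M \<longleftrightarrow>
     (\<forall>w :: nat \<Rightarrow> complex. (\<Sum>j\<in>{1..n}. \<Sum>k\<in>{1..n}. M j k * w j * cnj (w k)) \<ge> 0)"

end

theory Submission imports Defs begin

text \<open>
  Each factor is a power series sum_N c_N (z_j conj z_k)^N with nonnegative coefficients
  c_N = (a;q)_N / (b;q)_N q^(alpha N^2), i.e. a convergent nonnegative combination of the
  rank-one positive semidefinite matrices (z_j^N conj z_k^N). The Hadamard product of such a
  rank-one matrix with a positive semidefinite one is again positive semidefinite, and positive
  semidefiniteness survives limits, so the product of the factors is positive semidefinite.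
  Convergence is assumed on the disk when alpha = 0; when alpha > 0 the ratio of consecutive
  terms tends to 0, because the coefficient ratio tends to 1 while q^(alpha (2N+1)) tends to 0.
\<close>

lemma sums_nonneg_complex:
  fixes f :: "nat \<Rightarrow> complex"
  assumes "f sums s" and "\<And>N. 0 \<le> f N"
  shows "0 \<le> s"
proof -
  have nonneg_eq: "{x::complex. 0 \<le> x} = \<real>\<^sub>\<ge>\<^sub>0"
    by (auto simp: complex_nonneg_Reals_iff less_eq_complex_def)
  have "s \<in> {x. 0 \<le> x}"
  proof (rule Lim_in_closed_set)
    show "closed {x::complex. 0 \<le> x}"
      unfolding nonneg_eq by simp
    show "\<forall>\<^sub>F N in sequentially. (\<Sum>i<N. f i) \<in> {x. 0 \<le> x}"
      using assms(2) by (simp add: sum_nonneg)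
    show "(\<lambda>N. \<Sum>i<N. f i) \<longlonglongrightarrow> s"
      using assms(1) by (simp add: sums_def)
  qed simp
  then show ?thesis by simp
qed

lemma psd_matrix_const_one: "psd_matrix n (\<lambda>j k. 1)"
  unfolding psd_matrix_def
proof
  fix w :: "nat \<Rightarrow> complex"
  define S where "S = sum w {1..n}"
  have "(\<Sum>j\<in>{1..n}. \<Sum>k\<in>{1..n}. 1 * w j * cnj (w k)) = S * cnj S"
    unfolding S_def by (simp add: sum_distrib_left sum_distrib_right cnj_sum) (rule sum.swap)
  also have "\<dots> = complex_of_real ((cmod S)\<^sup>2)"
    by (metis complex_norm_square of_real_power)
  also have "\<dots> \<ge> 0"
    by (simp add: less_eq_complex_def)
  finally show "(\<Sum>j\<in>{1..n}. \<Sum>k\<in>{1..n}. 1 * w j * cnj (w k)) \<ge> 0" .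
qed

lemma psd_matrix_mult_rank_one:
  assumes "psd_matrix n K" and "0 \<le> c"
  shows "psd_matrix n (\<lambda>j k. c * u j * cnj (u k) * K j k)"
  unfolding psd_matrix_def
proof
  fix w :: "nat \<Rightarrow> complex"
  have "(\<Sum>j\<in>{1..n}. \<Sum>k\<in>{1..n}. c * u j * cnj (u k) * K j k * w j * cnj (w k))
      = c * (\<Sum>j\<in>{1..n}. \<Sum>k\<in>{1..n}. K j k * (u j * w j) * cnj (u k * w k))"
    by (simp add: sum_distrib_left algebra_simps)
  also have "\<dots> \<ge> 0"
    using assms unfolding psd_matrix_def
    by (intro mult_nonneg_nonneg) (auto simp del: complex_cnj_mult)
  finally show "(\<Sum>j\<in>{1..n}. \<Sum>k\<in>{1..n}. c * u j * cnj (u k) * K j k * w j * cnj (w k)) \<ge> 0" .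
qed

lemma psd_matrix_sums:
  assumes "\<And>N. psd_matrix n (M N)"
    and "\<And>j k. j \<in> {1..n} \<Longrightarrow> k \<in> {1..n} \<Longrightarrow> (\<lambda>N. M N j k) sums S j k"
  shows "psd_matrix n S"
  unfolding psd_matrix_def
proof
  fix w :: "nat \<Rightarrow> complex"
  have "(\<lambda>N. \<Sum>j\<in>{1..n}. \<Sum>k\<in>{1..n}. M N j k * w j * cnj (w k))
        sums (\<Sum>j\<in>{1..n}. \<Sum>k\<in>{1..n}. S j k * w j * cnj (w k))"
    using assms(2) by (intro sums_sum sums_mult2)
  then show "(\<Sum>j\<in>{1..n}. \<Sum>k\<in>{1..n}. S j k * w j * cnj (w k)) \<ge> 0"
    by (rule sums_nonneg_complex) (use assms(1) in \<open>simp add: psd_matrix_def\<close>)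
qed

lemma psd_matrix_prod_series:
  assumes "finite L"
    and "\<And>l N. l \<in> L \<Longrightarrow> 0 \<le> c l N"
    and "\<And>l j k. l \<in> L \<Longrightarrow> j \<in> {1..n} \<Longrightarrow> k \<in> {1..n} \<Longrightarrow>
           (\<lambda>N. c l N * u l N j * cnj (u l N k)) sums F l j k"
  shows "psd_matrix n (\<lambda>j k. \<Prod>l\<in>L. F l j k)"
  using assms
proof (induction L rule: finite_induct)
  case empty
  show ?case using psd_matrix_const_one by simp
next
  case (insert l L)
  have IH: "psd_matrix n (\<lambda>j k. \<Prod>l\<in>L. F l j k)"
    by (rule insert.IH) (use insert.prems in auto)
  have "psd_matrix n (\<lambda>j k. F l j k * (\<Prod>l\<in>L. F l j k))"
  proof (rule psd_matrix_sums)
    show "psd_matrix n (\<lambda>j k. c l N * u l N j * cnj (u l N k) * (\<Prod>l\<in>L. F l j k))" for N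
      using IH insert.prems(1) by (intro psd_matrix_mult_rank_one) auto
    show "(\<lambda>N. c l N * u l N j * cnj (u l N k) * (\<Prod>l\<in>L. F l j k)) sums (F l j k * (\<Prod>l\<in>L. F l j k))"
      if "j \<in> {1..n}" "k \<in> {1..n}" for j k
      using insert.prems(2) that by (intro sums_mult2) auto
  qed
  then show ?case
    using insert.hyps by simp
qed

definition rAs_coeff_ratio :: "complex list \<Rightarrow> complex list \<Rightarrow> real \<Rightarrow> nat \<Rightarrow> complex" where
  "rAs_coeff_ratio as bs q N =
     (\<Prod>a\<leftarrow>as. 1 - a * complex_of_real (q ^ N)) / (\<Prod>b\<leftarrow>bs. 1 - b * complex_of_real (q ^ N))"

lemma prod_list_mult_distrib:
  "(\<Prod>x\<leftarrow>xs. f x * g x) = (\<Prod>x\<leftarrow>xs. f x) * (\<Prod>x\<leftarrow>xs. (g x :: 'a :: comm_monoid_mult))"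
  by (induction xs) (auto simp: algebra_simps)

lemma qpoch_multi_Suc:
  "qpoch_multi zs q (Suc N) = qpoch_multi zs q N * (\<Prod>a\<leftarrow>zs. 1 - a * complex_of_real (q ^ N))"
  unfolding qpoch_multi_def qpoch_def by (simp add: prod_list_mult_distrib)

lemma rAs_coeff_Suc: "rAs_coeff as bs q (Suc N) = rAs_coeff as bs q N * rAs_coeff_ratio as bs q N"
  unfolding rAs_coeff_def rAs_coeff_ratio_def qpoch_multi_Suc by simp

lemma tendsto_prod_list_one_minus_geometric:
  assumes "0 < q" "q < 1"
  shows "(\<lambda>N. \<Prod>a\<leftarrow>as. 1 - a * complex_of_real (q ^ N)) \<longlonglongrightarrow> 1"
proof (induction as)
  case Nil
  then show ?case by simp
next
  case (Cons a as)
  have "(\<lambda>N. complex_of_real (q ^ N)) \<longlonglongrightarrow> of_real 0"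
    using assms by (intro tendsto_of_real LIMSEQ_power_zero) auto
  then have "(\<lambda>N. 1 - a * complex_of_real (q ^ N)) \<longlonglongrightarrow> 1 - a * 0"
    by (intro tendsto_intros) auto
  from tendsto_mult[OF this Cons] show ?case by simp
qed

lemma rAs_coeff_ratio_tendsto:
  assumes "0 < q" "q < 1"
  shows "rAs_coeff_ratio as bs q \<longlonglongrightarrow> 1"
  using tendsto_divide[OF tendsto_prod_list_one_minus_geometric[OF assms]
                          tendsto_prod_list_one_minus_geometric[OF assms]]
  unfolding rAs_coeff_ratio_def by simp

lemma rAs_term_Suc:
  assumes "0 < q"
  shows "rAs_term \<alpha> as bs q w (Suc N) =
           rAs_term \<alpha> as bs q w N *
           (rAs_coeff_ratio as bs q N * complex_of_real (q powr (\<alpha> * (2 * real N + 1))) * w)"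
proof -
  have "\<alpha> * real (Suc N) ^ 2 = \<alpha> * real N ^ 2 + \<alpha> * (2 * real N + 1)"
    by (simp add: power2_eq_square algebra_simps)
  then have "q powr (\<alpha> * real (Suc N) ^ 2) = q powr (\<alpha> * real N ^ 2) * q powr (\<alpha> * (2 * real N + 1))"
    by (simp add: powr_add)
  then show ?thesis
    unfolding rAs_term_def rAs_coeff_Suc by (simp add: algebra_simps)
qed

lemma tendsto_powr_odd_zero:
  assumes "0 < q" "q < 1" "0 < \<alpha>"
  shows "(\<lambda>N. q powr (\<alpha> * (2 * real N + 1))) \<longlonglongrightarrow> 0"
proof -
  have geometric: "q powr (\<alpha> * (2 * real N + 1)) = (q powr (2 * \<alpha>)) ^ N * q powr \<alpha>" for N
    using assms by (simp add: powr_realpow[symmetric] powr_powr powr_add[symmetric] algebra_simps)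
  have "q powr (2 * \<alpha>) < 1 powr (2 * \<alpha>)"
    using assms by (intro powr_less_mono2) auto
  then have "(\<lambda>N. (q powr (2 * \<alpha>)) ^ N) \<longlonglongrightarrow> 0"
    by (intro LIMSEQ_power_zero) simp_all
  from tendsto_mult_left_zero[OF this, of "q powr \<alpha>"] show ?thesis
    unfolding geometric by simp
qed

lemma summable_rAs_term:
  assumes "0 < q" "q < 1" "0 < \<alpha>"
  shows "summable (rAs_term \<alpha> as bs q w)"
proof -
  define r where "r N = rAs_coeff_ratio as bs q N * complex_of_real (q powr (\<alpha> * (2 * real N + 1))) * w" for N
  have "r \<longlonglongrightarrow> 1 * of_real 0 * w"
    unfolding r_def
    using assms by (intro tendsto_intros rAs_coeff_ratio_tendsto tendsto_powr_odd_zero)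
  then have "(\<lambda>N. norm (r N)) \<longlonglongrightarrow> 0"
    using tendsto_norm by fastforce
  then have "\<forall>\<^sub>F N in sequentially. norm (r N) < 1/2"
    by (rule order_tendstoD) simp
  then obtain N0 where N0: "\<And>N. N \<ge> N0 \<Longrightarrow> norm (r N) < 1/2"
    by (auto simp: eventually_sequentially)
  show ?thesis
  proof (rule summable_ratio_test[of "1/2" N0])
    fix N assume "N \<ge> N0"
    have "norm (rAs_term \<alpha> as bs q w (Suc N)) = norm (rAs_term \<alpha> as bs q w N) * norm (r N)"
      unfolding rAs_term_Suc[OF assms(1)] r_def by (simp add: norm_mult)
    also have "\<dots> \<le> norm (rAs_term \<alpha> as bs q w N) * (1/2)"
      using N0[OF \<open>N \<ge> N0\<close>] by (intro mult_left_mono) auto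
    finally show "norm (rAs_term \<alpha> as bs q w (Suc N)) \<le> 1/2 * norm (rAs_term \<alpha> as bs q w N)"
      by simp
  qed simp
qed

lemma rAs_term_mult_cnj:
  "rAs_term \<alpha> as bs q (x * cnj y) N =
     rAs_coeff as bs q N * complex_of_real (q powr (\<alpha> * real N ^ 2)) * x ^ N * cnj (y ^ N)"
  unfolding rAs_term_def by (simp add: power_mult_distrib mult.assoc)

theorem mainTheorem15:
  fixes m n :: nat
    and q \<alpha> R :: "nat \<Rightarrow> real"
    and as bs :: "nat \<Rightarrow> complex list"
    and z :: "nat \<Rightarrow> nat \<Rightarrow> complex"
  assumes q_bounds: "\<And>l. l \<in> {1..m} \<Longrightarrow> 0 < q l \<and> q l < 1"
    and alpha_nonneg: "\<And>l. l \<in> {1..m} \<Longrightarrow> \<alpha> l \<ge> 0"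
    and coeff_nonneg: "\<And>l N. l \<in> {1..m} \<Longrightarrow> rAs_coeff (as l) (bs l) (q l) N \<ge> 0"
    and disk: "\<And>l. l \<in> {1..m} \<Longrightarrow> \<alpha> l = 0 \<Longrightarrow>
        R l < 1 \<and> (\<forall>j\<in>{1..n}. norm (z j l) < R l) \<and>
        (\<forall>w. norm w < (R l)^2 \<longrightarrow> summable (rAs_term 0 (as l) (bs l) (q l) w))"
  shows "psd_matrix n (\<lambda>j k. \<Prod>l\<in>{1..m}. rAs (\<alpha> l) (as l) (bs l) (q l) (z j l * cnj (z k l)))"
proof (rule psd_matrix_prod_series)
  show "0 \<le> rAs_coeff (as l) (bs l) (q l) N * complex_of_real (q l powr (\<alpha> l * real N ^ 2))"
    if "l \<in> {1..m}" for l N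
    using coeff_nonneg[OF that] by (intro mult_nonneg_nonneg) (auto simp: less_eq_complex_def)
  fix l j k assume l: "l \<in> {1..m}" and jk: "j \<in> {1..n}" "k \<in> {1..n}"
  have "summable (rAs_term (\<alpha> l) (as l) (bs l) (q l) (z j l * cnj (z k l)))"
  proof (cases "\<alpha> l = 0")
    case True
    with disk[OF l] jk have "norm (z j l * cnj (z k l)) < (R l)\<^sup>2"
      by (auto simp: power2_eq_square intro!: norm_mult_less)
    with disk[OF l True] True show ?thesis by simp
  next
    case False
    with alpha_nonneg[OF l] q_bounds[OF l] show ?thesis
      by (intro summable_rAs_term) auto
  qed
  then show "(\<lambda>N. rAs_coeff (as l) (bs l) (q l) N * complex_of_real (q l powr (\<alpha> l * real N ^ 2))
                 * z j l ^ N * cnj (z k l ^ N))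
             sums rAs (\<alpha> l) (as l) (bs l) (q l) (z j l * cnj (z k l))"
    unfolding rAs_def rAs_term_mult_cnj[symmetric] by (rule summable_sums)
qed simp

end
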